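(* Let $E$ be a finite set and $\underline{I}=(I_\omega)_{\omega\in E}$ a family of non-empty finite sets. The causal switch spaces $\mathrm{CSwitch}(\underline{I})$ are exactly the causally complete spaces of input histories $\Theta$ with $E^\Theta=E$, $I^\Theta_\omega=I_\omega$ for all $\omega$, and $\Theta=\mathrm{Ext}(\Theta)$.
   Context: A partial function on $(Y_x)_{x\in X}$ is a function $f$ with $\mathrm{dom}(f)\subseteq X$ and $f(x)\in Y_x$; ordered by restriction. Compatible = agreeing on common domain; a compatible set $\mathcal F$ has join $\bigvee\mathcal F$ (union). $\Theta$ is $\vee$-prime if for compatible $\mathcal F\subseteq\Theta$ with $\bigvee\mathcal F\in\Theta$ we have $\bigvee\mathcal F\in\mathcal F$. A space of input histories is a finite $\vee$-prime set of partial functions; $E^\Theta=\bigcup_{h\in\Theta}\mathrm{dom}(h)$, $I^\Theta_\omega=\{h(\omega):h\in\Theta,\omega\in\mathrm{dom}(h)\}$, $\mathrm{Ext}(\Theta)=\{\bigvee\mathcal F:\emptyset\ne\mathcal F\subseteq\Theta\text{ compatible}\}$. Free-choice: maximal elements of $\mathrm{Ext}(\Theta)$ are exactly the total functions in $\prod_{\omega\in E^\Theta}I^\Theta_\omega$. $\mathrm{tips}_\Theta(h)=\mathrm{dom}(h)\setminus\bigcup\{\mathrm{dom}(k):k\in\mathrm{Ext}(\Theta),k<h\}$. Causally complete: free-choice and $|\mathrm{tips}_\Theta(h)|=1$ for all $h\in\Theta$. Conditional sequential composition: for $(\Theta'_k)_{k\in\max\mathrm{Ext}(\Theta)}$ with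 disjoint event sets from $\Theta$, $\Theta\rightsquigarrow(\Theta'_k)_k=\Theta\cup\{k\vee h':k\in\max\mathrm{Ext}(\Theta),h'\in\Theta'_k\}$. Causal switch spaces, by induction on $|E|$: if $E=\emptyset$ the only one is the empty space; otherwise $\mathrm{CSwitch}(\underline I)$ consists of all $\Theta_{\omega_1}\rightsquigarrow(\Theta'_i)_{i\in I_{\omega_1}}$ with $\omega_1\in E$, $\Theta_{\omega_1}=\{\{\omega_1\mapsto i\}:i\in I_{\omega_1}\}$ (its maximal extended histories $\{\omega_1\mapsto i\}$ identified with $i$), and each $\Theta'_i\in\mathrm{CSwitch}((I_\omega)_{\omega\in E\setminus\{\omega_1\}})$. *)

theory Defs
  imports Main
begin

text \<open>Partial functions on a family of codomains are modelled as maps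
  'e \<rightharpoonup> 'v (a single ambient value type 'v; the fibre sets I_\<omega> are subsets of 'v).\<close>

definition compatible :: "('e \<rightharpoonup> 'v) set \<Rightarrow> bool" where
  "compatible F \<longleftrightarrow> (\<forall>f\<in>F. \<forall>g\<in>F. \<forall>x\<in>dom f \<inter> dom g. f x = g x)"

definition join :: "('e \<rightharpoonup> 'v) set \<Rightarrow> ('e \<rightharpoonup> 'v)" where
  "join F = (\<lambda>x. if \<exists>f\<in>F. x \<in> dom f then (SOME f. f \<in> F \<and> x \<in> dom f) x else None)"

definition strict_restr :: "('e \<rightharpoonup> 'v) \<Rightarrow> ('e \<rightharpoonup> 'v) \<Rightarrow> bool" where
  "strict_restr k h \<longleftrightarrow> k \<subseteq>\<^sub>m h \<and> k \<noteq> h"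

definition vee_prime :: "('e \<rightharpoonup> 'v) set \<Rightarrow> bool" where
  "vee_prime \<Theta> \<longleftrightarrow> (\<forall>F. F \<subseteq> \<Theta> \<and> compatible F \<and> join F \<in> \<Theta> \<longrightarrow> join F \<in> F)"

definition space_of_input_histories :: "('e \<rightharpoonup> 'v) set \<Rightarrow> bool" where
  "space_of_input_histories \<Theta> \<longleftrightarrow> finite \<Theta> \<and> vee_prime \<Theta>"

definition events :: "('e \<rightharpoonup> 'v) set \<Rightarrow> 'e set" where
  "events \<Theta> = (\<Union>h\<in>\<Theta>. dom h)"

definition inputs :: "('e \<rightharpoonup> 'v) set \<Rightarrow> 'e \<Rightarrow> 'v set" where
  "inputs \<Theta> \<omega> = {the (h \<omega>) | h. h \<in> \<Theta> \<and> \<omega> \<in> dom h}"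

definition Ext :: "('e \<rightharpoonup> 'v) set \<Rightarrow> ('e \<rightharpoonup> 'v) set" where
  "Ext \<Theta> = {join F | F. F \<noteq> {} \<and> F \<subseteq> \<Theta> \<and> compatible F}"

definition maxExt :: "('e \<rightharpoonup> 'v) set \<Rightarrow> ('e \<rightharpoonup> 'v) set" where
  "maxExt \<Theta> = {k \<in> Ext \<Theta>. \<forall>k'\<in>Ext \<Theta>. k \<subseteq>\<^sub>m k' \<longrightarrow> k' = k}"

text \<open>Free choice. Convention: the empty space (no events) counts as free-choice,
  matching the paper's base case CSwitch of the empty family = the empty space.\<close>
definition free_choice :: "('e \<rightharpoonup> 'v) set \<Rightarrow> bool" where
  "free_choice \<Theta> \<longleftrightarrow> \<Theta> = {} \<or>
     maxExt \<Theta> = {k. dom k = events \<Theta> \<and> (\<forall>\<omega>\<in>events \<Theta>. the (k \<omega>) \<in> inputs \<Theta> \<omega>)}"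

definition tips :: "('e \<rightharpoonup> 'v) set \<Rightarrow> ('e \<rightharpoonup> 'v) \<Rightarrow> 'e set" where
  "tips \<Theta> h = dom h - \<Union>{dom k | k. k \<in> Ext \<Theta> \<and> strict_restr k h}"

definition causally_complete :: "('e \<rightharpoonup> 'v) set \<Rightarrow> bool" where
  "causally_complete \<Theta> \<longleftrightarrow> free_choice \<Theta> \<and> (\<forall>h\<in>\<Theta>. card (tips \<Theta> h) = 1)"

text \<open>Conditional sequential composition; the family is indexed by the maximal extended histories.\<close>
definition cond_seq :: "('e \<rightharpoonup> 'v) set \<Rightarrow> (('e \<rightharpoonup> 'v) \<Rightarrow> ('e \<rightharpoonup> 'v) set) \<Rightarrow> ('e \<rightharpoonup> 'v) set" where
  "cond_seq \<Theta> \<Theta>' = \<Theta> \<union> {join {k, h'} | k h'. k \<in> maxExt \<Theta> \<and> h' \<in> \<Theta>' k}"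

definition single_event_space :: "'e \<Rightarrow> ('e \<Rightarrow> 'v set) \<Rightarrow> ('e \<rightharpoonup> 'v) set" where
  "single_event_space \<omega> I = {[\<omega> \<mapsto> i] | i. i \<in> I \<omega>}"

text \<open>Causal switch spaces CSwitch((I_\<omega>)_{\<omega>\<in>E}); only the values of I on E matter.
  The family (\<Theta>'_i)_{i\<in>I_\<omega>1} is a function of i, and the maximal extended history
  [\<omega>1 \<mapsto> i] is identified with i.\<close>
inductive cswitch :: "'e set \<Rightarrow> ('e \<Rightarrow> 'v set) \<Rightarrow> ('e \<rightharpoonup> 'v) set \<Rightarrow> bool" where
  empty: "cswitch {} I {}"
| step: "\<lbrakk> E \<noteq> {}; \<omega>1 \<in> E; \<forall>i\<in>I \<omega>1. cswitch (E - {\<omega>1}) I (\<Theta>' i) \<rbrakk>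
         \<Longrightarrow> cswitch E I (cond_seq (single_event_space \<omega>1 I) (\<lambda>k. \<Theta>' (the (k \<omega>1))))"

end

theory Submission
  imports Defs
begin

text \<open>For a finite space, \<open>\<Theta> = Ext \<Theta>\<close> together with \<open>\<or>\<close>-primality says exactly that
  compatible histories are comparable and that the empty history is absent.
  A minimal history then has a single tip, hence a singleton domain, and comparability
  forces all minimal histories to live on one event \<open>\<omega>\<close>: the space is a switch at \<open>\<omega>\<close>,
  i.e. the histories \<open>[\<omega> \<mapsto> i]\<close> followed by a branch \<open>\<Theta>'\<^sub>i\<close> on the remaining events.
  Finiteness, comparability, free choice and the tip condition hold for a switch iff they
  hold for every branch, so both inclusions follow by induction on \<open>E\<close>.\<close>

section \<open>Joins of compatible histories\<close>

lemma compatible_pair_iff: "compatible {f, g} \<longleftrightarrow> (\<forall>x\<in>dom f \<inter> dom g. f x = g x)"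
  unfolding compatible_def by (simp add: Int_commute) (metis IntI)

lemma join_apply:
  assumes "compatible F" "f \<in> F" "x \<in> dom f"
  shows "join F x = f x"
proof -
  have ex: "\<exists>g. g \<in> F \<and> x \<in> dom g" using assms by blast
  let ?g = "SOME g. g \<in> F \<and> x \<in> dom g"
  have "?g \<in> F \<and> x \<in> dom ?g" using someI_ex[OF ex] .
  then have "?g x = f x" using assms unfolding compatible_def by blast
  with ex show ?thesis unfolding join_def by auto
qed

lemma join_apply_None: "\<forall>f\<in>F. x \<notin> dom f \<Longrightarrow> join F x = None"
  unfolding join_def by auto

lemma map_le_join: "compatible F \<Longrightarrow> f \<in> F \<Longrightarrow> f \<subseteq>\<^sub>m join F"
  using join_apply[of F f] unfolding map_le_def by auto

lemma join_eq_greatest: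
  assumes "m \<in> F" "\<forall>f\<in>F. f \<subseteq>\<^sub>m m"
  shows "join F = m"
proof
  fix x
  show "join F x = m x"
  proof (cases "x \<in> dom m")
    case True
    have "compatible F"
      using assms unfolding compatible_def map_le_def by (metis IntD1 IntD2)
    with True show ?thesis using join_apply[of F m x] assms(1) by blast
  next
    case False
    then have "\<forall>f\<in>F. x \<notin> dom f" using assms map_le_implies_dom_le by blast
    with False show ?thesis by (simp add: join_apply_None domIff)
  qed
qed

lemma join_empty: "join {} = Map.empty"
  unfolding join_def by auto

lemma join_singleton: "join {h} = h"
  by (rule join_eq_greatest) auto

lemma join_map_upd_singleton:
  assumes "\<omega> \<notin> dom g"
  shows "join {[\<omega> \<mapsto> i], g} = g(\<omega> \<mapsto> i)"
proof
  have c: "compatible {[\<omega> \<mapsto> i], g}" using assms by (auto simp: compatible_pair_iff)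
  fix x
  consider "x = \<omega>" | "x \<in> dom g" | "x \<noteq> \<omega>" "x \<notin> dom g" by blast
  then show "join {[\<omega> \<mapsto> i], g} x = (g(\<omega> \<mapsto> i)) x"
  proof cases
    case 1 then show ?thesis using join_apply[OF c, of "[\<omega> \<mapsto> i]"] by simp
  next
    case 2 then show ?thesis using join_apply[OF c, of g] assms by auto
  next
    case 3 then show ?thesis by (simp add: join_apply_None domIff)
  qed
qed

section \<open>Minimal and maximal histories\<close>

lemma asymp_on_strict_restr: "asymp_on A strict_restr"
  unfolding asymp_on_def strict_restr_def using map_le_antisym by blast

lemma transp_on_strict_restr: "transp_on A strict_restr"
  unfolding transp_on_def strict_restr_def using map_le_antisym map_le_trans by blast

lemma finite_has_minimal_below:
  assumes "finite \<Theta>" "h \<in> \<Theta>"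
  obtains m where "m \<in> \<Theta>" "m \<subseteq>\<^sub>m h" "\<forall>k\<in>\<Theta>. k \<subseteq>\<^sub>m m \<longrightarrow> k = m"
proof -
  have "\<exists>m\<in>\<Theta>. m \<subseteq>\<^sub>m h" using assms(2) map_le_refl by blast
  then obtain m where m: "m \<in> \<Theta>" "m \<subseteq>\<^sub>m h" "\<forall>k\<in>\<Theta>. strict_restr k m \<longrightarrow> \<not> k \<subseteq>\<^sub>m h"
    using Finite_Set.bex_min_element_with_property[OF assms(1) asymp_on_strict_restr
        transp_on_strict_restr, of "\<lambda>m. m \<subseteq>\<^sub>m h"] by blast
  have "k = m" if "k \<in> \<Theta>" "k \<subseteq>\<^sub>m m" for k
  proof -
    have "k \<subseteq>\<^sub>m h" using \<open>k \<subseteq>\<^sub>m m\<close> m(2) by (rule map_le_trans)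
    then show ?thesis using m(3) that unfolding strict_restr_def by blast
  qed
  with m that show thesis by blast
qed

definition maximals :: "('e \<rightharpoonup> 'v) set \<Rightarrow> ('e \<rightharpoonup> 'v) set" where
  "maximals \<Theta> = {k\<in>\<Theta>. \<forall>k'\<in>\<Theta>. k \<subseteq>\<^sub>m k' \<longrightarrow> k' = k}"

lemma finite_has_maximal_above:
  assumes "finite \<Theta>" "h \<in> \<Theta>"
  obtains m where "m \<in> maximals \<Theta>" "h \<subseteq>\<^sub>m m"
proof -
  have "\<exists>m\<in>\<Theta>. h \<subseteq>\<^sub>m m" using assms(2) map_le_refl by blast
  then obtain m where m: "m \<in> \<Theta>" "h \<subseteq>\<^sub>m m" "\<forall>k\<in>\<Theta>. strict_restr m k \<longrightarrow> \<not> h \<subseteq>\<^sub>m k"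
    using Finite_Set.bex_max_element_with_property[OF assms(1) asymp_on_strict_restr
        transp_on_strict_restr, of "\<lambda>m. h \<subseteq>\<^sub>m m"] by blast
  have "k = m" if "k \<in> \<Theta>" "m \<subseteq>\<^sub>m k" for k
  proof -
    have "h \<subseteq>\<^sub>m k" using m(2) \<open>m \<subseteq>\<^sub>m k\<close> by (rule map_le_trans)
    then show ?thesis using m(3) that unfolding strict_restr_def by blast
  qed
  with m that show thesis unfolding maximals_def by blast
qed

lemma finite_chain_has_greatest:
  assumes "finite F" "F \<noteq> {}" "\<forall>a\<in>F. \<forall>b\<in>F. a \<subseteq>\<^sub>m b \<or> b \<subseteq>\<^sub>m a"
  obtains m where "m \<in> F" "\<forall>f\<in>F. f \<subseteq>\<^sub>m m"
proof -
  obtain m where m: "m \<in> F" "\<forall>f\<in>F. f \<noteq> m \<longrightarrow> \<not> strict_restr m f"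
    using Finite_Set.bex_max_element[OF assms(1) asymp_on_strict_restr transp_on_strict_restr
        assms(2)] by blast
  have "f \<subseteq>\<^sub>m m" if "f \<in> F" for f
    using assms(3) m that unfolding strict_restr_def by (metis map_le_refl)
  with m that show thesis by blast
qed

section \<open>Join-closed \<open>\<or>\<close>-prime spaces\<close>

definition compatible_comparable :: "('e \<rightharpoonup> 'v) set \<Rightarrow> bool" where
  "compatible_comparable \<Theta> \<longleftrightarrow>
     (\<forall>a\<in>\<Theta>. \<forall>b\<in>\<Theta>. compatible {a, b} \<longrightarrow> a \<subseteq>\<^sub>m b \<or> b \<subseteq>\<^sub>m a)"

lemma join_mem_if_compatible_comparable:
  assumes "finite \<Theta>" "compatible_comparable \<Theta>" "F \<subseteq> \<Theta>" "F \<noteq> {}" "compatible F"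
  shows "join F \<in> F"
proof -
  have "a \<subseteq>\<^sub>m b \<or> b \<subseteq>\<^sub>m a" if "a \<in> F" "b \<in> F" for a b
  proof -
    have "compatible {a, b}" using assms(5) that unfolding compatible_def by blast
    then show ?thesis using assms(2,3) that unfolding compatible_comparable_def by blast
  qed
  then obtain m where m: "m \<in> F" "\<forall>f\<in>F. f \<subseteq>\<^sub>m m"
    using finite_chain_has_greatest[OF finite_subset[OF assms(3,1)] assms(4)] by blast
  then have "join F = m" by (rule join_eq_greatest)
  with m show ?thesis by simp
qed

lemma compatible_singleton: "compatible {h}"
  unfolding compatible_def by simp

lemma Ext_fixed_vee_prime_iff:
  fixes \<Theta> :: "('e \<rightharpoonup> 'v) set"
  assumes "finite \<Theta>"
  shows "\<Theta> = Ext \<Theta> \<and> vee_prime \<Theta> \<longleftrightarrow> compatible_comparable \<Theta> \<and> Map.empty \<notin> \<Theta>"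
proof
  assume "\<Theta> = Ext \<Theta> \<and> vee_prime \<Theta>"
  then have ext: "Ext \<Theta> \<subseteq> \<Theta>" and prime: "vee_prime \<Theta>" by auto
  have "Map.empty \<notin> \<Theta>"
  proof
    assume "Map.empty \<in> \<Theta>"
    moreover have "compatible ({} :: ('e \<rightharpoonup> 'v) set)" unfolding compatible_def by simp
    ultimately have "join {} \<in> ({} :: ('e \<rightharpoonup> 'v) set)"
      using prime[unfolded vee_prime_def, rule_format, of "{}"] by (simp add: join_empty)
    then show False by simp
  qed
  moreover have "compatible_comparable \<Theta>" unfolding compatible_comparable_def
  proof (intro ballI impI)
    fix a b assume ab: "a \<in> \<Theta>" "b \<in> \<Theta>" "compatible {a, b}"
    then have "join {a, b} \<in> Ext \<Theta>" unfolding Ext_def by blast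
    then have "join {a, b} \<in> {a, b}"
      using ext ab prime[unfolded vee_prime_def, rule_format, of "{a, b}"] by blast
    moreover have "a \<subseteq>\<^sub>m join {a, b}" "b \<subseteq>\<^sub>m join {a, b}" using map_le_join ab(3) by auto
    ultimately show "a \<subseteq>\<^sub>m b \<or> b \<subseteq>\<^sub>m a" by auto
  qed
  ultimately show "compatible_comparable \<Theta> \<and> Map.empty \<notin> \<Theta>" by blast
next
  assume cc: "compatible_comparable \<Theta> \<and> Map.empty \<notin> \<Theta>"
  have "vee_prime \<Theta>" unfolding vee_prime_def
  proof (intro allI impI)
    fix F assume F: "F \<subseteq> \<Theta> \<and> compatible F \<and> join F \<in> \<Theta>"
    then have "F \<noteq> {}" using cc by (auto simp: join_empty)
    then show "join F \<in> F" using join_mem_if_compatible_comparable[OF assms] cc F by blast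
  qed
  moreover have "Ext \<Theta> \<subseteq> \<Theta>"
    unfolding Ext_def using join_mem_if_compatible_comparable[OF assms] cc by blast
  moreover have "h \<in> Ext \<Theta>" if "h \<in> \<Theta>" for h
    unfolding Ext_def using that join_singleton[of h] compatible_singleton[of h]
    by (intro CollectI exI[of _ "{h}"]) simp
  ultimately show "\<Theta> = Ext \<Theta> \<and> vee_prime \<Theta>" by blast
qed

section \<open>Free choice\<close>

lemma map_le_empty_iff: "k \<subseteq>\<^sub>m Map.empty \<longleftrightarrow> k = Map.empty"
  unfolding map_le_def by (auto simp: fun_eq_iff domIff)

lemma maximals_subset: "maximals \<Theta> \<subseteq> \<Theta>"
  unfolding maximals_def by blast

lemma maximals_singleton: "maximals {h} = {h}"
  unfolding maximals_def by blast

lemma maximals_insert_empty: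
  assumes "Map.empty \<notin> \<Theta>" "\<Theta> \<noteq> {}"
  shows "maximals (insert Map.empty \<Theta>) = maximals \<Theta>"
proof -
  obtain t where "t \<in> \<Theta>" using assms(2) by blast
  then have "Map.empty \<notin> maximals (insert Map.empty \<Theta>)"
    using assms(1) unfolding maximals_def by force
  then show ?thesis unfolding maximals_def by (auto simp: map_le_empty_iff)
qed

definition total_choices :: "'e set \<Rightarrow> ('e \<Rightarrow> 'v set) \<Rightarrow> ('e \<rightharpoonup> 'v) set" where
  "total_choices E I = {k. dom k = E \<and> (\<forall>\<omega>\<in>E. the (k \<omega>) \<in> I \<omega>)}"

lemma total_choices_empty: "total_choices {} I = {Map.empty}"
  unfolding total_choices_def by auto

lemma total_choices_cong: "\<forall>\<omega>\<in>E. I \<omega> = J \<omega> \<Longrightarrow> total_choices E I = total_choices E J"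
  unfolding total_choices_def by auto

lemma total_choice_through:
  assumes "\<forall>y\<in>E. I y \<noteq> {}" "x \<in> E" "v \<in> I x"
  shows "\<exists>k\<in>total_choices E I. k x = Some v"
proof
  let ?k = "\<lambda>y. if y \<in> E then Some (if y = x then v else SOME u. u \<in> I y) else None"
  show "?k \<in> total_choices E I"
    unfolding total_choices_def using assms by (auto simp: some_in_eq split: if_splits)
  show "?k x = Some v" using assms(2) by simp
qed

lemma events_inputs_of_maximals:
  assumes "finite \<Theta>" "maximals \<Theta> = total_choices E I" "\<forall>x\<in>E. I x \<noteq> {}"
  shows "events \<Theta> = E" "\<forall>x\<in>E. inputs \<Theta> x = I x"
proof -
  have total_in: "k \<in> \<Theta>" if "k \<in> total_choices E I" for k
    using that assms(2) maximals_subset by blast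
  have below_total: "\<exists>m\<in>total_choices E I. h \<subseteq>\<^sub>m m" if "h \<in> \<Theta>" for h
    using finite_has_maximal_above[OF assms(1) that] assms(2) by metis
  show "events \<Theta> = E"
  proof
    show "events \<Theta> \<subseteq> E"
    proof
      fix x assume "x \<in> events \<Theta>"
      then obtain h where "h \<in> \<Theta>" "x \<in> dom h" unfolding events_def by blast
      moreover obtain m where "m \<in> total_choices E I" "h \<subseteq>\<^sub>m m"
        using below_total \<open>h \<in> \<Theta>\<close> by blast
      ultimately show "x \<in> E"
        using map_le_implies_dom_le unfolding total_choices_def by blast
    qed
    show "E \<subseteq> events \<Theta>"
    proof
      fix x assume "x \<in> E"
      then obtain v where "v \<in> I x" using assms(3) by blast
      then obtain k where "k \<in> total_choices E I" "k x = Some v"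
        using total_choice_through[OF assms(3) \<open>x \<in> E\<close>] by blast
      then show "x \<in> events \<Theta>" unfolding events_def using total_in by blast
    qed
  qed
  show "\<forall>x\<in>E. inputs \<Theta> x = I x"
  proof (intro ballI equalityI subsetI)
    fix x v assume "x \<in> E" "v \<in> inputs \<Theta> x"
    then obtain h where h: "h \<in> \<Theta>" "x \<in> dom h" "v = the (h x)" unfolding inputs_def by blast
    then obtain m where "m \<in> total_choices E I" "h \<subseteq>\<^sub>m m" using below_total by blast
    then show "v \<in> I x" using h \<open>x \<in> E\<close> unfolding total_choices_def map_le_def by auto
  next
    fix x v assume "x \<in> E" "v \<in> I x"
    then obtain k where "k \<in> total_choices E I" "k x = Some v"
      using total_choice_through[OF assms(3)] by blast
    then show "v \<in> inputs \<Theta> x" unfolding inputs_def using total_in by force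
  qed
qed

definition tips_within :: "('e \<rightharpoonup> 'v) set \<Rightarrow> ('e \<rightharpoonup> 'v) \<Rightarrow> 'e set" where
  "tips_within \<Theta> h = dom h - \<Union>{dom k | k. k \<in> \<Theta> \<and> strict_restr k h}"

text \<open>Adjoining the empty history lets the maximality condition cover \<open>\<Theta> = {}\<close> as well,
  where it forces \<open>E = {}\<close>.\<close>
definition causal_tree :: "'e set \<Rightarrow> ('e \<Rightarrow> 'v set) \<Rightarrow> ('e \<rightharpoonup> 'v) set \<Rightarrow> bool" where
  "causal_tree E I \<Theta> \<longleftrightarrow> finite \<Theta> \<and> compatible_comparable \<Theta> \<and> Map.empty \<notin> \<Theta>
     \<and> maximals (insert Map.empty \<Theta>) = total_choices E I
     \<and> (\<forall>h\<in>\<Theta>. card (tips_within \<Theta> h) = 1)"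

lemma events_insert_empty: "events (insert Map.empty \<Theta>) = events \<Theta>"
  unfolding events_def by simp

lemma inputs_insert_empty: "inputs (insert Map.empty \<Theta>) = inputs \<Theta>"
  unfolding inputs_def by auto

lemma causal_tree_events_inputs:
  assumes "causal_tree E I \<Theta>" "\<forall>x\<in>E. I x \<noteq> {}"
  shows "events \<Theta> = E" "\<forall>x\<in>E. inputs \<Theta> x = I x"
  using events_inputs_of_maximals[of "insert Map.empty \<Theta>" E I] assms
  unfolding causal_tree_def events_insert_empty inputs_insert_empty by auto

lemma maxExt_eq_maximals: "\<Theta> = Ext \<Theta> \<Longrightarrow> maxExt \<Theta> = maximals \<Theta>"
  unfolding maxExt_def maximals_def by simp

lemma tips_eq_tips_within: "\<Theta> = Ext \<Theta> \<Longrightarrow> tips \<Theta> = tips_within \<Theta>"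
  unfolding tips_def tips_within_def by simp

lemma free_choice_iff_total_choices:
  "free_choice \<Theta> \<longleftrightarrow> \<Theta> = {} \<or> maxExt \<Theta> = total_choices (events \<Theta>) (inputs \<Theta>)"
  unfolding free_choice_def total_choices_def ..

lemma causal_tree_iff:
  assumes "\<forall>\<omega>\<in>E. I \<omega> \<noteq> {}"
  shows "space_of_input_histories \<Theta> \<and> causally_complete \<Theta> \<and> events \<Theta> = E
           \<and> (\<forall>\<omega>\<in>E. inputs \<Theta> \<omega> = I \<omega>) \<and> \<Theta> = Ext \<Theta>
         \<longleftrightarrow> causal_tree E I \<Theta>"
proof
  assume rhs: "space_of_input_histories \<Theta> \<and> causally_complete \<Theta> \<and> events \<Theta> = E
         \<and> (\<forall>\<omega>\<in>E. inputs \<Theta> \<omega> = I \<omega>) \<and> \<Theta> = Ext \<Theta>"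
  then have fin: "finite \<Theta>" and ext: "\<Theta> = Ext \<Theta>"
    and cc: "compatible_comparable \<Theta>" "Map.empty \<notin> \<Theta>"
    using Ext_fixed_vee_prime_iff unfolding space_of_input_histories_def by blast+
  have "maximals (insert Map.empty \<Theta>) = total_choices E I"
  proof (cases "\<Theta> = {}")
    case True
    then have "E = {}" using rhs unfolding events_def by simp
    with True show ?thesis by (simp add: maximals_singleton total_choices_empty)
  next
    case False
    then have "maximals \<Theta> = total_choices (events \<Theta>) (inputs \<Theta>)"
      using rhs maxExt_eq_maximals[OF ext]
      unfolding causally_complete_def by (simp add: free_choice_iff_total_choices)
    then show ?thesis using False cc maximals_insert_empty rhs total_choices_cong by metis
  qed
  then show "causal_tree E I \<Theta>"
    using rhs fin cc tips_eq_tips_within[OF ext]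
    unfolding causal_tree_def causally_complete_def by simp
next
  assume ct: "causal_tree E I \<Theta>"
  then have fin: "finite \<Theta>" and cc: "compatible_comparable \<Theta>" "Map.empty \<notin> \<Theta>"
    unfolding causal_tree_def by simp_all
  then have ext: "\<Theta> = Ext \<Theta>" and "vee_prime \<Theta>"
    using Ext_fixed_vee_prime_iff by blast+
  have ev: "events \<Theta> = E" and inp: "\<forall>x\<in>E. inputs \<Theta> x = I x"
    using causal_tree_events_inputs[OF ct assms] by simp_all
  have "free_choice \<Theta>"
  proof (cases "\<Theta> = {}")
    case False
    then have "maxExt \<Theta> = total_choices E I"
      using ct maximals_insert_empty[OF cc(2) False] maxExt_eq_maximals[OF ext]
      unfolding causal_tree_def by simp
    then show ?thesis using free_choice_iff_total_choices ev inp total_choices_cong by metis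
  qed (simp add: free_choice_def)
  then show "space_of_input_histories \<Theta> \<and> causally_complete \<Theta> \<and> events \<Theta> = E
         \<and> (\<forall>\<omega>\<in>E. inputs \<Theta> \<omega> = I \<omega>) \<and> \<Theta> = Ext \<Theta>"
    using ct fin ext \<open>vee_prime \<Theta>\<close> ev inp tips_eq_tips_within[OF ext]
    unfolding space_of_input_histories_def causally_complete_def causal_tree_def by simp
qed

section \<open>Switches\<close>

lemma map_upd_le_map_upd_iff:
  assumes "\<omega> \<notin> dom g" "\<omega> \<notin> dom g'"
  shows "g(\<omega> \<mapsto> i) \<subseteq>\<^sub>m g'(\<omega> \<mapsto> j) \<longleftrightarrow> i = j \<and> g \<subseteq>\<^sub>m g'"
proof
  assume le: "g(\<omega> \<mapsto> i) \<subseteq>\<^sub>m g'(\<omega> \<mapsto> j)"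
  then have "i = j" unfolding map_le_def by (metis domI fun_upd_same option.inject)
  moreover have "g x = g' x" if "x \<in> dom g" for x
  proof -
    have "x \<noteq> \<omega>" using that assms(1) by blast
    with le that show ?thesis unfolding map_le_def by (metis domIff fun_upd_other)
  qed
  ultimately show "i = j \<and> g \<subseteq>\<^sub>m g'" unfolding map_le_def by blast
qed (auto simp: map_le_def)

lemma map_upd_eq_map_upd_iff:
  "\<omega> \<notin> dom g \<Longrightarrow> \<omega> \<notin> dom g' \<Longrightarrow> g(\<omega> \<mapsto> i) = g'(\<omega> \<mapsto> j) \<longleftrightarrow> i = j \<and> g = g'"
  by (metis map_upd_le_map_upd_iff map_le_antisym map_le_refl)

lemma compatible_map_upd_iff:
  assumes "\<omega> \<notin> dom g" "\<omega> \<notin> dom g'"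
  shows "compatible {g(\<omega> \<mapsto> i), g'(\<omega> \<mapsto> j)} \<longleftrightarrow> i = j \<and> compatible {g, g'}"
proof
  assume "compatible {g(\<omega> \<mapsto> i), g'(\<omega> \<mapsto> j)}"
  then have agree: "\<forall>x\<in>dom (g(\<omega> \<mapsto> i)) \<inter> dom (g'(\<omega> \<mapsto> j)). (g(\<omega> \<mapsto> i)) x = (g'(\<omega> \<mapsto> j)) x"
    unfolding compatible_pair_iff .
  then have "i = j" by simp
  moreover have "g x = g' x" if "x \<in> dom g \<inter> dom g'" for x
  proof -
    have "x \<noteq> \<omega>" using that assms by auto
    then show ?thesis using agree[rule_format, of x] that by auto
  qed
  ultimately show "i = j \<and> compatible {g, g'}" unfolding compatible_pair_iff by blast
qed (auto simp: compatible_pair_iff)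

definition switch :: "'e \<Rightarrow> ('e \<Rightarrow> 'v set) \<Rightarrow> ('v \<Rightarrow> ('e \<rightharpoonup> 'v) set) \<Rightarrow> ('e \<rightharpoonup> 'v) set" where
  "switch \<omega> I \<Theta>' = (\<Union>i\<in>I \<omega>. (\<lambda>g. g(\<omega> \<mapsto> i)) ` insert Map.empty (\<Theta>' i))"

lemma mem_switch_iff:
  "h \<in> switch \<omega> I \<Theta>' \<longleftrightarrow> (\<exists>i\<in>I \<omega>. \<exists>g\<in>insert Map.empty (\<Theta>' i). h = g(\<omega> \<mapsto> i))"
  unfolding switch_def by blast

lemma empty_notin_switch: "Map.empty \<notin> switch \<omega> I \<Theta>'"
  unfolding mem_switch_iff by (auto simp: fun_eq_iff)

lemma switch_nonempty: "I \<omega> \<noteq> {} \<Longrightarrow> switch \<omega> I \<Theta>' \<noteq> {}"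
  unfolding switch_def by blast

lemma total_choices_split:
  assumes "\<omega> \<in> E"
  shows "total_choices E I = (\<Union>i\<in>I \<omega>. (\<lambda>g. g(\<omega> \<mapsto> i)) ` total_choices (E - {\<omega>}) I)"
proof (intro equalityI subsetI)
  fix k assume k: "k \<in> total_choices E I"
  then obtain i where i: "k \<omega> = Some i" using assms unfolding total_choices_def by blast
  then have "i \<in> I \<omega>" using k assms unfolding total_choices_def by force
  moreover have "k = (k(\<omega> := None))(\<omega> \<mapsto> i)" using i by auto
  moreover have "k(\<omega> := None) \<in> total_choices (E - {\<omega>}) I"
    using k unfolding total_choices_def by auto
  ultimately show "k \<in> (\<Union>i\<in>I \<omega>. (\<lambda>g. g(\<omega> \<mapsto> i)) ` total_choices (E - {\<omega>}) I)" by blast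
next
  fix k assume "k \<in> (\<Union>i\<in>I \<omega>. (\<lambda>g. g(\<omega> \<mapsto> i)) ` total_choices (E - {\<omega>}) I)"
  then obtain i g where "i \<in> I \<omega>" "g \<in> total_choices (E - {\<omega>}) I" "k = g(\<omega> \<mapsto> i)" by blast
  moreover from this have "dom k = E" using assms unfolding total_choices_def by auto
  ultimately show "k \<in> total_choices E I" unfolding total_choices_def by auto
qed

lemma branch_of_UN_map_upd:
  assumes "\<forall>j\<in>J. \<forall>g\<in>A j. \<omega> \<notin> dom g" "i \<in> J"
  shows "(\<lambda>h. h(\<omega> := None)) ` {h \<in> (\<Union>j\<in>J. (\<lambda>g. g(\<omega> \<mapsto> j)) ` A j). h \<omega> = Some i} = A i"
    (is "?proj ` ?U = _")
proof (intro equalityI subsetI)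
  fix g assume "g \<in> ?proj ` ?U"
  then obtain h where h: "h \<in> ?U" "g = h(\<omega> := None)" by blast
  then obtain j g' where j: "j \<in> J" "g' \<in> A j" "h = g'(\<omega> \<mapsto> j)" by blast
  have "\<omega> \<notin> dom g'" using assms(1) j by blast
  moreover have "i = j" using h(1) j(3) by simp
  ultimately show "g \<in> A i" using h(2) j by (simp add: domIff)
next
  fix g assume g: "g \<in> A i"
  then have mem: "g(\<omega> \<mapsto> i) \<in> ?U" using assms(2) by (simp add: rev_bexI)
  have "g = ?proj (g(\<omega> \<mapsto> i))" using assms g by (auto simp: domIff)
  then show "g \<in> ?proj ` ?U" using mem by (rule image_eqI)
qed

lemma UN_map_upd_image_eq_iff:
  assumes "\<forall>j\<in>J. \<forall>g\<in>A j \<union> B j. \<omega> \<notin> dom g"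
  shows "(\<Union>j\<in>J. (\<lambda>g. g(\<omega> \<mapsto> j)) ` A j) = (\<Union>j\<in>J. (\<lambda>g. g(\<omega> \<mapsto> j)) ` B j)
    \<longleftrightarrow> (\<forall>j\<in>J. A j = B j)"
proof
  assume eq: "(\<Union>j\<in>J. (\<lambda>g. g(\<omega> \<mapsto> j)) ` A j) = (\<Union>j\<in>J. (\<lambda>g. g(\<omega> \<mapsto> j)) ` B j)"
  show "\<forall>j\<in>J. A j = B j"
  proof
    fix i assume "i \<in> J"
    then show "A i = B i"
      using branch_of_UN_map_upd[of J A \<omega> i] branch_of_UN_map_upd[of J B \<omega> i] assms eq by auto
  qed
qed auto

locale switch_branches =
  fixes \<omega> :: 'e and I :: "'e \<Rightarrow> 'v set" and \<Theta>' :: "'v \<Rightarrow> ('e \<rightharpoonup> 'v) set"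
  assumes branch_fresh: "\<forall>i\<in>I \<omega>. \<forall>g\<in>\<Theta>' i. \<omega> \<notin> dom g"
    and empty_notin_branch: "\<forall>i\<in>I \<omega>. Map.empty \<notin> \<Theta>' i"
begin

lemma notin_dom_branch: "i \<in> I \<omega> \<Longrightarrow> g \<in> insert Map.empty (\<Theta>' i) \<Longrightarrow> \<omega> \<notin> dom g"
  using branch_fresh by auto

lemma finite_switch_iff:
  assumes "finite (I \<omega>)"
  shows "finite (switch \<omega> I \<Theta>') \<longleftrightarrow> (\<forall>i\<in>I \<omega>. finite (\<Theta>' i))"
proof
  assume fin: "finite (switch \<omega> I \<Theta>')"
  show "\<forall>i\<in>I \<omega>. finite (\<Theta>' i)"
  proof
    fix i assume i: "i \<in> I \<omega>"
    have "\<Theta>' i \<subseteq> (\<lambda>h. h(\<omega> := None)) ` switch \<omega> I \<Theta>'"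
    proof
      fix g assume g: "g \<in> \<Theta>' i"
      then have "g = (g(\<omega> \<mapsto> i))(\<omega> := None)" using notin_dom_branch i by (auto simp: domIff)
      moreover have "g(\<omega> \<mapsto> i) \<in> switch \<omega> I \<Theta>'" using g i unfolding mem_switch_iff by blast
      ultimately show "g \<in> (\<lambda>h. h(\<omega> := None)) ` switch \<omega> I \<Theta>'" by blast
    qed
    then show "finite (\<Theta>' i)" using fin finite_subset by blast
  qed
qed (use assms in \<open>auto simp: switch_def\<close>)

lemma compatible_comparable_switch_iff:
  "compatible_comparable (switch \<omega> I \<Theta>') \<longleftrightarrow> (\<forall>i\<in>I \<omega>. compatible_comparable (\<Theta>' i))"
proof
  assume cc: "compatible_comparable (switch \<omega> I \<Theta>')"
  show "\<forall>i\<in>I \<omega>. compatible_comparable (\<Theta>' i)" unfolding compatible_comparable_def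
  proof (intro ballI impI)
    fix i a b assume i: "i \<in> I \<omega>" and ab: "a \<in> \<Theta>' i" "b \<in> \<Theta>' i" "compatible {a, b}"
    have fr: "\<omega> \<notin> dom a" "\<omega> \<notin> dom b" using notin_dom_branch i ab by auto
    have "a(\<omega> \<mapsto> i) \<in> switch \<omega> I \<Theta>'" "b(\<omega> \<mapsto> i) \<in> switch \<omega> I \<Theta>'"
      using i ab unfolding mem_switch_iff by blast+
    moreover have "compatible {a(\<omega> \<mapsto> i), b(\<omega> \<mapsto> i)}"
      using compatible_map_upd_iff[OF fr] ab by simp
    ultimately have "a(\<omega> \<mapsto> i) \<subseteq>\<^sub>m b(\<omega> \<mapsto> i) \<or> b(\<omega> \<mapsto> i) \<subseteq>\<^sub>m a(\<omega> \<mapsto> i)"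
      using cc unfolding compatible_comparable_def by blast
    then show "a \<subseteq>\<^sub>m b \<or> b \<subseteq>\<^sub>m a" using map_upd_le_map_upd_iff fr by metis
  qed
next
  assume cc: "\<forall>i\<in>I \<omega>. compatible_comparable (\<Theta>' i)"
  show "compatible_comparable (switch \<omega> I \<Theta>')" unfolding compatible_comparable_def
  proof (intro ballI impI)
    fix a b assume "a \<in> switch \<omega> I \<Theta>'" "b \<in> switch \<omega> I \<Theta>'" and ab: "compatible {a, b}"
    then obtain i g j g' where i: "i \<in> I \<omega>" "g \<in> insert Map.empty (\<Theta>' i)" "a = g(\<omega> \<mapsto> i)"
      and j: "j \<in> I \<omega>" "g' \<in> insert Map.empty (\<Theta>' j)" "b = g'(\<omega> \<mapsto> j)"
      unfolding mem_switch_iff by blast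
    have fr: "\<omega> \<notin> dom g" "\<omega> \<notin> dom g'" using notin_dom_branch i j by auto
    have "i = j" and "compatible {g, g'}" using compatible_map_upd_iff[OF fr] ab i j by auto
    then have "g \<subseteq>\<^sub>m g' \<or> g' \<subseteq>\<^sub>m g"
      using cc i j unfolding compatible_comparable_def by auto
    then show "a \<subseteq>\<^sub>m b \<or> b \<subseteq>\<^sub>m a" using map_upd_le_map_upd_iff[OF fr] i j \<open>i = j\<close> by auto
  qed
qed


lemma maximals_switch:
  "maximals (switch \<omega> I \<Theta>') = (\<Union>i\<in>I \<omega>. (\<lambda>g. g(\<omega> \<mapsto> i)) ` maximals (insert Map.empty (\<Theta>' i)))"
proof (intro equalityI subsetI)
  fix h assume h: "h \<in> maximals (switch \<omega> I \<Theta>')"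
  then have hmax: "k = h" if "k \<in> switch \<omega> I \<Theta>'" "h \<subseteq>\<^sub>m k" for k
    using that unfolding maximals_def by blast
  have "h \<in> switch \<omega> I \<Theta>'" using h maximals_subset by blast
  then obtain i g where i: "i \<in> I \<omega>" "g \<in> insert Map.empty (\<Theta>' i)" and hg: "h = g(\<omega> \<mapsto> i)"
    unfolding mem_switch_iff by blast
  have "g' = g" if "g' \<in> insert Map.empty (\<Theta>' i)" "g \<subseteq>\<^sub>m g'" for g'
  proof -
    have fr: "\<omega> \<notin> dom g" "\<omega> \<notin> dom g'" using notin_dom_branch i that by auto
    have "g'(\<omega> \<mapsto> i) \<in> switch \<omega> I \<Theta>'" using i that unfolding mem_switch_iff by blast
    moreover have "h \<subseteq>\<^sub>m g'(\<omega> \<mapsto> i)" using map_upd_le_map_upd_iff[OF fr] that hg by simp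
    ultimately have "g'(\<omega> \<mapsto> i) = g(\<omega> \<mapsto> i)" using hmax hg by simp
    then show "g' = g" using map_upd_eq_map_upd_iff[OF fr] by metis
  qed
  then have "g \<in> maximals (insert Map.empty (\<Theta>' i))" using i unfolding maximals_def by blast
  then show "h \<in> (\<Union>i\<in>I \<omega>. (\<lambda>g. g(\<omega> \<mapsto> i)) ` maximals (insert Map.empty (\<Theta>' i)))"
    using i hg by blast
next
  fix h assume "h \<in> (\<Union>i\<in>I \<omega>. (\<lambda>g. g(\<omega> \<mapsto> i)) ` maximals (insert Map.empty (\<Theta>' i)))"
  then obtain i g where i: "i \<in> I \<omega>" and g: "g \<in> maximals (insert Map.empty (\<Theta>' i))"
    and hg: "h = g(\<omega> \<mapsto> i)"
    by blast
  have g_in: "g \<in> insert Map.empty (\<Theta>' i)" using g maximals_subset by blast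
  have "k = h" if k: "k \<in> switch \<omega> I \<Theta>'" and le: "h \<subseteq>\<^sub>m k" for k
  proof -
    obtain j g' where j: "j \<in> I \<omega>" "g' \<in> insert Map.empty (\<Theta>' j)" and kg: "k = g'(\<omega> \<mapsto> j)"
      using k unfolding mem_switch_iff by blast
    have fr: "\<omega> \<notin> dom g" "\<omega> \<notin> dom g'" using notin_dom_branch i j g_in by auto
    have "i = j" "g \<subseteq>\<^sub>m g'" using map_upd_le_map_upd_iff[OF fr] le hg kg by auto
    then have "g' = g" using g j unfolding maximals_def by blast
    then show "k = h" using hg kg \<open>i = j\<close> by simp
  qed
  moreover have "h \<in> switch \<omega> I \<Theta>'" using i g_in hg unfolding mem_switch_iff by blast
  ultimately show "h \<in> maximals (switch \<omega> I \<Theta>')" unfolding maximals_def by blast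
qed

lemma maximals_switch_iff:
  assumes "\<omega> \<in> E"
  shows "maximals (switch \<omega> I \<Theta>') = total_choices E I
    \<longleftrightarrow> (\<forall>i\<in>I \<omega>. maximals (insert Map.empty (\<Theta>' i)) = total_choices (E - {\<omega>}) I)"
  unfolding maximals_switch total_choices_split[OF assms]
proof (rule UN_map_upd_image_eq_iff)
  show "\<forall>i\<in>I \<omega>. \<forall>g\<in>maximals (insert Map.empty (\<Theta>' i)) \<union> total_choices (E - {\<omega>}) I. \<omega> \<notin> dom g"
    using notin_dom_branch maximals_subset unfolding total_choices_def by blast
qed

lemma doms_below_switch:
  assumes i: "i \<in> I \<omega>" and g: "g \<in> insert Map.empty (\<Theta>' i)"
  shows "{dom k | k. k \<in> switch \<omega> I \<Theta>' \<and> strict_restr k (g(\<omega> \<mapsto> i))}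
       = {insert \<omega> (dom g') | g'. g' \<in> insert Map.empty (\<Theta>' i) \<and> strict_restr g' g}"
proof (intro equalityI subsetI)
  have fr: "\<omega> \<notin> dom g" using notin_dom_branch i g by blast
  fix S assume "S \<in> {dom k | k. k \<in> switch \<omega> I \<Theta>' \<and> strict_restr k (g(\<omega> \<mapsto> i))}"
  then obtain j g' where j: "j \<in> I \<omega>" "g' \<in> insert Map.empty (\<Theta>' j)"
    and below: "strict_restr (g'(\<omega> \<mapsto> j)) (g(\<omega> \<mapsto> i))" and S: "S = dom (g'(\<omega> \<mapsto> j))"
    unfolding mem_switch_iff by blast
  have fr': "\<omega> \<notin> dom g'" using notin_dom_branch j by blast
  have "i = j" "strict_restr g' g"
    using below map_upd_le_map_upd_iff[OF fr' fr] map_upd_eq_map_upd_iff[OF fr' fr]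
    unfolding strict_restr_def by auto
  with S j show "S \<in> {insert \<omega> (dom g') | g'. g' \<in> insert Map.empty (\<Theta>' i) \<and> strict_restr g' g}"
    by auto
next
  have fr: "\<omega> \<notin> dom g" using notin_dom_branch i g by blast
  fix S assume "S \<in> {insert \<omega> (dom g') | g'. g' \<in> insert Map.empty (\<Theta>' i) \<and> strict_restr g' g}"
  then obtain g' where g': "S = insert \<omega> (dom g')" "g' \<in> insert Map.empty (\<Theta>' i)" "strict_restr g' g"
    by blast
  have fr': "\<omega> \<notin> dom g'" using notin_dom_branch i g' by blast
  have "g'(\<omega> \<mapsto> i) \<in> switch \<omega> I \<Theta>'" using i g' unfolding mem_switch_iff by blast
  moreover have "strict_restr (g'(\<omega> \<mapsto> i)) (g(\<omega> \<mapsto> i))"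
    using g' map_upd_le_map_upd_iff[OF fr' fr] map_upd_eq_map_upd_iff[OF fr' fr]
    unfolding strict_restr_def by auto
  moreover have "S = dom (g'(\<omega> \<mapsto> i))" using g' by simp
  ultimately show "S \<in> {dom k | k. k \<in> switch \<omega> I \<Theta>' \<and> strict_restr k (g(\<omega> \<mapsto> i))}"
    by blast
qed

lemma tips_within_switch:
  assumes i: "i \<in> I \<omega>" and g: "g \<in> insert Map.empty (\<Theta>' i)"
  shows "tips_within (switch \<omega> I \<Theta>') (g(\<omega> \<mapsto> i))
       = (if g = Map.empty then {\<omega>} else tips_within (\<Theta>' i) g)"
proof (cases "g = Map.empty")
  case True
  then have "\<not> strict_restr g' g" for g' unfolding strict_restr_def by (simp add: map_le_empty_iff)
  with True show ?thesis unfolding tips_within_def doms_below_switch[OF i g] by simp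
next
  case False
  then have "strict_restr Map.empty g" unfolding strict_restr_def by simp
  then have "\<Union>{insert \<omega> (dom g') | g'. g' \<in> insert Map.empty (\<Theta>' i) \<and> strict_restr g' g}
      = insert \<omega> (\<Union>{dom g' | g'. g' \<in> \<Theta>' i \<and> strict_restr g' g})"
    by blast
  moreover have "\<omega> \<notin> dom g" using notin_dom_branch i g by blast
  ultimately show ?thesis using False unfolding tips_within_def doms_below_switch[OF i g] by auto
qed

lemma tips_switch_iff:
  "(\<forall>h\<in>switch \<omega> I \<Theta>'. card (tips_within (switch \<omega> I \<Theta>') h) = 1)
    \<longleftrightarrow> (\<forall>i\<in>I \<omega>. \<forall>g\<in>\<Theta>' i. card (tips_within (\<Theta>' i) g) = 1)"
proof
  assume tips: "\<forall>h\<in>switch \<omega> I \<Theta>'. card (tips_within (switch \<omega> I \<Theta>') h) = 1"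
  show "\<forall>i\<in>I \<omega>. \<forall>g\<in>\<Theta>' i. card (tips_within (\<Theta>' i) g) = 1"
  proof (intro ballI)
    fix i g assume i: "i \<in> I \<omega>" and g: "g \<in> \<Theta>' i"
    then have "g(\<omega> \<mapsto> i) \<in> switch \<omega> I \<Theta>'" unfolding mem_switch_iff by blast
    moreover have "g \<noteq> Map.empty" using empty_notin_branch i g by blast
    ultimately show "card (tips_within (\<Theta>' i) g) = 1"
      using tips tips_within_switch[OF i] g by fastforce
  qed
next
  assume tips: "\<forall>i\<in>I \<omega>. \<forall>g\<in>\<Theta>' i. card (tips_within (\<Theta>' i) g) = 1"
  show "\<forall>h\<in>switch \<omega> I \<Theta>'. card (tips_within (switch \<omega> I \<Theta>') h) = 1"
  proof
    fix h assume "h \<in> switch \<omega> I \<Theta>'"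
    then obtain i g where "i \<in> I \<omega>" "g \<in> insert Map.empty (\<Theta>' i)" "h = g(\<omega> \<mapsto> i)"
      unfolding mem_switch_iff by blast
    then show "card (tips_within (switch \<omega> I \<Theta>') h) = 1"
      using tips tips_within_switch by auto
  qed
qed

lemma causal_tree_switch_iff:
  assumes "\<omega> \<in> E" "finite (I \<omega>)" "I \<omega> \<noteq> {}"
  shows "causal_tree E I (switch \<omega> I \<Theta>') \<longleftrightarrow> (\<forall>i\<in>I \<omega>. causal_tree (E - {\<omega>}) I (\<Theta>' i))"
  unfolding causal_tree_def
    maximals_insert_empty[OF empty_notin_switch switch_nonempty[of I \<omega>, OF assms(3)]]
    finite_switch_iff[OF assms(2)] compatible_comparable_switch_iff maximals_switch_iff[OF assms(1)]
    tips_switch_iff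
  using empty_notin_switch[of \<omega> I \<Theta>'] empty_notin_branch by auto

end

section \<open>Causal switch spaces\<close>

lemma Ext_single_event_space: "Ext (single_event_space \<omega> I) = single_event_space \<omega> I"
proof (intro equalityI subsetI)
  fix k assume "k \<in> Ext (single_event_space \<omega> I)"
  then obtain F where F: "k = join F" "F \<noteq> {}" "F \<subseteq> single_event_space \<omega> I" "compatible F"
    unfolding Ext_def by blast
  then obtain f where f: "f \<in> F" by blast
  have "g = f" if g: "g \<in> F" for g
  proof -
    obtain a b where "f = [\<omega> \<mapsto> a]" "g = [\<omega> \<mapsto> b]"
      using F(3) f g unfolding single_event_space_def by blast
    moreover have "compatible {f, g}" using F(4) f g unfolding compatible_def by blast
    ultimately show "g = f" unfolding compatible_pair_iff by simp
  qed
  then have "F = {f}" using f by blast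
  then show "k \<in> single_event_space \<omega> I" using F(1,3) f by (simp add: join_singleton)
next
  fix h assume "h \<in> single_event_space \<omega> I"
  then show "h \<in> Ext (single_event_space \<omega> I)"
    unfolding Ext_def using join_singleton[of h] compatible_singleton[of h]
    by (intro CollectI exI[of _ "{h}"]) simp
qed

lemma maxExt_single_event_space: "maxExt (single_event_space \<omega> I) = single_event_space \<omega> I"
  unfolding maxExt_def Ext_single_event_space unfolding single_event_space_def map_le_def by auto

lemma cond_seq_single_event_space:
  assumes "\<forall>i\<in>I \<omega>. \<forall>g\<in>\<Theta>' i. \<omega> \<notin> dom g"
  shows "cond_seq (single_event_space \<omega> I) (\<lambda>k. \<Theta>' (the (k \<omega>))) = switch \<omega> I \<Theta>'"
proof -
  have "{join {k, h'} | k h'. k \<in> maxExt (single_event_space \<omega> I) \<and> h' \<in> \<Theta>' (the (k \<omega>))}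
      = {h'(\<omega> \<mapsto> i) | i h'. i \<in> I \<omega> \<and> h' \<in> \<Theta>' i}"
    (is "?L = ?R")
  proof (intro equalityI subsetI)
    fix x assume "x \<in> ?L"
    then obtain i h' where i: "i \<in> I \<omega>" and h': "h' \<in> \<Theta>' i"
      and x: "x = join {[\<omega> \<mapsto> i], h'}"
      unfolding maxExt_single_event_space unfolding single_event_space_def by auto
    have "\<omega> \<notin> dom h'" using assms i h' by blast
    with x have "x = h'(\<omega> \<mapsto> i)" by (simp add: join_map_upd_singleton)
    with i h' show "x \<in> ?R" by blast
  next
    fix x assume "x \<in> ?R"
    then obtain i h' where i: "i \<in> I \<omega>" and h': "h' \<in> \<Theta>' i" and x: "x = h'(\<omega> \<mapsto> i)"
      by blast
    have "\<omega> \<notin> dom h'" using assms i h' by blast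
    with x have "x = join {[\<omega> \<mapsto> i], h'}" by (simp add: join_map_upd_singleton)
    moreover have "[\<omega> \<mapsto> i] \<in> maxExt (single_event_space \<omega> I)"
      unfolding maxExt_single_event_space unfolding single_event_space_def using i by blast
    ultimately show "x \<in> ?L" using h' by (intro CollectI exI[of _ "[\<omega> \<mapsto> i]"] exI[of _ h']) simp
  qed
  moreover have "switch \<omega> I \<Theta>'
      = single_event_space \<omega> I \<union> {h'(\<omega> \<mapsto> i) | i h'. i \<in> I \<omega> \<and> h' \<in> \<Theta>' i}"
    unfolding switch_def single_event_space_def by auto
  ultimately show ?thesis unfolding cond_seq_def by simp
qed

lemma causal_tree_empty: "causal_tree {} I {}"
  unfolding causal_tree_def compatible_comparable_def
  by (simp add: maximals_singleton total_choices_empty)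

lemma causal_tree_branches:
  assumes "\<forall>i\<in>I \<omega>. causal_tree (E - {\<omega>}) I (\<Theta>' i)" "\<forall>x\<in>E. I x \<noteq> {}"
  shows "switch_branches \<omega> I \<Theta>'"
proof
  show "\<forall>i\<in>I \<omega>. \<forall>g\<in>\<Theta>' i. \<omega> \<notin> dom g"
    using causal_tree_events_inputs(1) assms unfolding events_def by fastforce
  show "\<forall>i\<in>I \<omega>. Map.empty \<notin> \<Theta>' i"
    using assms(1) unfolding causal_tree_def by blast
qed

lemma causal_tree_if_cswitch:
  "cswitch E I \<Theta> \<Longrightarrow> \<forall>\<omega>\<in>E. finite (I \<omega>) \<and> I \<omega> \<noteq> {} \<Longrightarrow> causal_tree E I \<Theta>"
proof (induction rule: cswitch.induct)
  case (empty I)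
  show ?case by (rule causal_tree_empty)
next
  case (step E \<omega> I \<Theta>')
  have fin: "finite (I \<omega>)" "I \<omega> \<noteq> {}" using step.prems step.hyps(2) by auto
  have branches: "\<forall>i\<in>I \<omega>. causal_tree (E - {\<omega>}) I (\<Theta>' i)" using step by simp
  interpret switch_branches \<omega> I \<Theta>'
    by (rule causal_tree_branches[OF branches]) (use step.prems in blast)
  have "causal_tree E I (switch \<omega> I \<Theta>')"
    using causal_tree_switch_iff[OF step.hyps(2) fin] branches by simp
  then show ?case by (simp add: cond_seq_single_event_space[of I \<omega> \<Theta>', OF branch_fresh])
qed

section \<open>Decomposition at the root\<close>

lemma minimal_dom_singleton:
  assumes "causal_tree E I \<Theta>" "m \<in> \<Theta>" "\<forall>k\<in>\<Theta>. k \<subseteq>\<^sub>m m \<longrightarrow> k = m"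
  obtains x where "dom m = {x}"
proof -
  have "tips_within \<Theta> m = dom m"
    using assms(3) unfolding tips_within_def strict_restr_def by blast
  moreover have "card (tips_within \<Theta> m) = 1" using assms(1,2) unfolding causal_tree_def by blast
  ultimately have "card (dom m) = 1" by simp
  then show thesis using that card_1_singletonE by blast
qed

lemma causal_tree_root:
  assumes "causal_tree E I \<Theta>" "\<Theta> \<noteq> {}"
  obtains \<omega> where "\<forall>h\<in>\<Theta>. \<exists>m\<in>\<Theta>. m \<subseteq>\<^sub>m h \<and> dom m = {\<omega>}"
proof -
  have fin: "finite \<Theta>" and cc: "compatible_comparable \<Theta>"
    using assms(1) unfolding causal_tree_def by simp_all
  obtain h0 where "h0 \<in> \<Theta>" using assms(2) by blast
  then obtain m0 where m0: "m0 \<in> \<Theta>" "\<forall>k\<in>\<Theta>. k \<subseteq>\<^sub>m m0 \<longrightarrow> k = m0"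
    using finite_has_minimal_below[OF fin] by metis
  then obtain \<omega> where \<omega>: "dom m0 = {\<omega>}" using minimal_dom_singleton[OF assms(1)] by metis
  have "\<exists>m\<in>\<Theta>. m \<subseteq>\<^sub>m h \<and> dom m = {\<omega>}" if h: "h \<in> \<Theta>" for h
  proof -
    obtain m where m: "m \<in> \<Theta>" "m \<subseteq>\<^sub>m h" "\<forall>k\<in>\<Theta>. k \<subseteq>\<^sub>m m \<longrightarrow> k = m"
      using finite_has_minimal_below[OF fin h] by metis
    then obtain \<omega>' where \<omega>': "dom m = {\<omega>'}" using minimal_dom_singleton[OF assms(1)] by metis
    have "\<omega>' = \<omega>"
    proof (rule ccontr)
      assume "\<omega>' \<noteq> \<omega>"
      then have "compatible {m0, m}" unfolding compatible_pair_iff using \<omega> \<omega>' by auto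
      then have "m0 \<subseteq>\<^sub>m m \<or> m \<subseteq>\<^sub>m m0"
        using cc m0(1) m(1) unfolding compatible_comparable_def by blast
      then have "dom m0 \<subseteq> dom m \<or> dom m \<subseteq> dom m0" using map_le_implies_dom_le by blast
      with \<open>\<omega>' \<noteq> \<omega>\<close> show False using \<omega> \<omega>' by auto
    qed
    with m \<omega>' show ?thesis by blast
  qed
  then show thesis using that by blast
qed

lemma switch_of_root:
  assumes "\<forall>h\<in>\<Theta>. \<exists>i\<in>I \<omega>. h \<omega> = Some i" "\<forall>i\<in>I \<omega>. [\<omega> \<mapsto> i] \<in> \<Theta>"
  obtains \<Theta>' where "switch_branches \<omega> I \<Theta>'" "\<Theta> = switch \<omega> I \<Theta>'"
proof
  let ?\<Theta>' = "\<lambda>i. {h(\<omega> := None) | h. h \<in> \<Theta> \<and> h \<omega> = Some i} - {Map.empty}"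
  show "switch_branches \<omega> I ?\<Theta>'" by unfold_locales auto
  show "\<Theta> = switch \<omega> I ?\<Theta>'"
  proof (intro equalityI subsetI)
    fix h assume "h \<in> \<Theta>"
    then obtain i where i: "i \<in> I \<omega>" "h \<omega> = Some i" using assms(1) by blast
    then have "h = (h(\<omega> := None))(\<omega> \<mapsto> i)" by auto
    moreover have "h(\<omega> := None) \<in> insert Map.empty (?\<Theta>' i)" using \<open>h \<in> \<Theta>\<close> i by blast
    ultimately show "h \<in> switch \<omega> I ?\<Theta>'" unfolding mem_switch_iff using i by blast
  next
    fix h assume "h \<in> switch \<omega> I ?\<Theta>'"
    then obtain i g where i: "i \<in> I \<omega>" "g \<in> insert Map.empty (?\<Theta>' i)" "h = g(\<omega> \<mapsto> i)"
      unfolding mem_switch_iff by blast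
    show "h \<in> \<Theta>"
    proof (cases "g = Map.empty")
      case True
      then show ?thesis using assms(2) i by simp
    next
      case False
      then obtain h' where "h' \<in> \<Theta>" "h' \<omega> = Some i" "g = h'(\<omega> := None)" using i by blast
      moreover from this have "h = h'" using i(3) by auto
      ultimately show ?thesis by simp
    qed
  qed
qed

lemma causal_tree_is_switch:
  assumes ct: "causal_tree E I \<Theta>" and ne: "\<forall>x\<in>E. I x \<noteq> {}" and "E \<noteq> {}"
  obtains \<omega> \<Theta>' where "\<omega> \<in> E" "switch_branches \<omega> I \<Theta>'" "\<Theta> = switch \<omega> I \<Theta>'"
proof -
  have ev: "events \<Theta> = E" and inp: "\<forall>x\<in>E. inputs \<Theta> x = I x"
    using causal_tree_events_inputs[OF ct ne] by simp_all
  then have "\<Theta> \<noteq> {}" using \<open>E \<noteq> {}\<close> unfolding events_def by auto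
  then obtain \<omega> where root: "\<forall>h\<in>\<Theta>. \<exists>m\<in>\<Theta>. m \<subseteq>\<^sub>m h \<and> dom m = {\<omega>}"
    using causal_tree_root[OF ct] by blast
  have root_dom: "\<omega> \<in> dom h" if "h \<in> \<Theta>" for h
    using root that map_le_implies_dom_le by fastforce
  then have "\<omega> \<in> E" using ev \<open>\<Theta> \<noteq> {}\<close> unfolding events_def by blast
  have "\<exists>i\<in>I \<omega>. h \<omega> = Some i" if h: "h \<in> \<Theta>" for h
  proof -
    obtain i where "h \<omega> = Some i" using root_dom[OF h] by blast
    moreover from this have "i \<in> inputs \<Theta> \<omega>" unfolding inputs_def using h by force
    ultimately show ?thesis using inp \<open>\<omega> \<in> E\<close> by auto
  qed
  moreover have "[\<omega> \<mapsto> i] \<in> \<Theta>" if i: "i \<in> I \<omega>" for i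
  proof -
    obtain h where h: "h \<in> \<Theta>" "h \<omega> = Some i"
      using i inp \<open>\<omega> \<in> E\<close> unfolding inputs_def by force
    then obtain m where m: "m \<in> \<Theta>" "m \<subseteq>\<^sub>m h" "dom m = {\<omega>}" using root by blast
    then have "m \<omega> = Some i" using h(2) unfolding map_le_def by auto
    with m(3) have "m = [\<omega> \<mapsto> i]" by (auto simp: fun_eq_iff)
    with m(1) show ?thesis by simp
  qed
  ultimately show thesis using switch_of_root that \<open>\<omega> \<in> E\<close> by metis
qed

lemma cswitch_if_causal_tree:
  "finite E \<Longrightarrow> \<forall>\<omega>\<in>E. finite (I \<omega>) \<and> I \<omega> \<noteq> {} \<Longrightarrow> causal_tree E I \<Theta> \<Longrightarrow> cswitch E I \<Theta>"
proof (induction E arbitrary: \<Theta> rule: finite_psubset_induct)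
  case (psubset E)
  have ne: "\<forall>x\<in>E. I x \<noteq> {}" using psubset.prems(1) by blast
  show ?case
  proof (cases "E = {}")
    case True
    have "events \<Theta> = {}" using causal_tree_events_inputs(1)[OF psubset.prems(2) ne] True by simp
    moreover have "Map.empty \<notin> \<Theta>" using psubset.prems(2) unfolding causal_tree_def by blast
    ultimately have "\<Theta> = {}" unfolding events_def by (auto simp: dom_eq_empty_conv)
    with True show ?thesis using cswitch.empty by simp
  next
    case False
    then obtain \<omega> \<Theta>' where \<omega>: "\<omega> \<in> E" "switch_branches \<omega> I \<Theta>'" "\<Theta> = switch \<omega> I \<Theta>'"
      using causal_tree_is_switch[OF psubset.prems(2) ne] by blast
    interpret switch_branches \<omega> I \<Theta>' by (fact \<omega>(2))
    have fin: "finite (I \<omega>)" "I \<omega> \<noteq> {}" using psubset.prems(1) \<omega>(1) by auto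
    have "\<forall>i\<in>I \<omega>. causal_tree (E - {\<omega>}) I (\<Theta>' i)"
      using causal_tree_switch_iff[OF \<omega>(1) fin] \<omega>(3) psubset.prems(2) by simp
    moreover have "E - {\<omega>} \<subset> E" using \<omega>(1) by blast
    moreover have "\<forall>x\<in>E - {\<omega>}. finite (I x) \<and> I x \<noteq> {}" using psubset.prems(1) by blast
    ultimately have "\<forall>i\<in>I \<omega>. cswitch (E - {\<omega>}) I (\<Theta>' i)"
      using psubset.IH by simp
    then have "cswitch E I (cond_seq (single_event_space \<omega> I) (\<lambda>k. \<Theta>' (the (k \<omega>))))"
      by (rule cswitch.step[OF False \<omega>(1)])
    then show ?thesis
      using cond_seq_single_event_space[of I \<omega> \<Theta>', OF branch_fresh] \<omega>(3) by simp
  qed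
qed

theorem corollary3:
  fixes E :: "'e set" and I :: "'e \<Rightarrow> 'v set" and \<Theta> :: "('e \<rightharpoonup> 'v) set"
  assumes "finite E"
    and "\<forall>\<omega>\<in>E. finite (I \<omega>) \<and> I \<omega> \<noteq> {}"
  shows "cswitch E I \<Theta> \<longleftrightarrow>
           (space_of_input_histories \<Theta> \<and> causally_complete \<Theta> \<and> events \<Theta> = E
            \<and> (\<forall>\<omega>\<in>E. inputs \<Theta> \<omega> = I \<omega>) \<and> \<Theta> = Ext \<Theta>)"
proof -
  have "\<forall>\<omega>\<in>E. I \<omega> \<noteq> {}" using assms(2) by blast
  show ?thesis unfolding causal_tree_iff[OF \<open>\<forall>\<omega>\<in>E. I \<omega> \<noteq> {}\<close>]
  proof
    assume "cswitch E I \<Theta>"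
    then show "causal_tree E I \<Theta>" using assms(2) by (rule causal_tree_if_cswitch)
  next
    assume "causal_tree E I \<Theta>"
    with assms show "cswitch E I \<Theta>" by (rule cswitch_if_causal_tree)
  qed
qed

end
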